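(* Let $\theta\mapsto K_m(\theta)\in\mathbb{C}^{D\times D}$, $m=0,\dots,d-1$, be differentiable with $\sum_mK_m^\dagger K_m=\mathbb{1}_D$, and fix $\theta_0$. Suppose the Hamiltonian-in-Kraus-span (HKS) condition holds at $\theta_0$: $H_s:=i\sum_mK_m^\dagger\partial_\theta K_m\in\mathrm{span}\{K_i^\dagger K_j:0\le i,j<d\}$ (all evaluated at $\theta_0$). Then there is a Hermitian $h\in\mathbb{C}^{d\times d}$ such that, writing $u_\theta=e^{i\theta h}$ and defining the isometry $W_\theta=(\mathbb{1}_D\otimes u_\theta^\dagger)V_\theta$, i.e. $W_\theta=\sum_m W_m(\theta)\otimes|m\rangle$ with $V_\theta=\sum_mK_m(\theta)\otimes|m\rangle$, one has $V_\theta=(\mathbb{1}_D\otimes u_\theta)W_\theta$ for all $\theta$ and $$\sum_m W_m(\theta_0)^\dagger\,\partial_\theta W_m(\theta_0)=0.$$ Consequently, if $\rho_{ss}$ is a fixed point of the channel $\mathcal{E}(X)=\sum_mK_mXK_m^\dagger$ at $\theta_0$ (which is also the channel of $W$), the quantities $\gamma^W=\sum_m\mathrm{Tr}(W_m\rho_{ss}\dot W_m^\dagger)$ and $\beta^W_\tau=\mathrm{Tr}[\sum_m\dot W_m\mathcal{E}^\tau(\sum_nW_n\rho_{ss}\dot W_n^\dagger)W_m^\dagger]$ vanish for all $\tau\ge0$, and the quantum Fisher information at $\theta_0$ of the $T$-site state $|\Phi^W_T\rangle$ generated by $W$ equals $4T\alpha^W$ with $\alpha^W=\sum_m\mathrm{Tr}(\dot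 W_m\rho_{ss}\dot W_m^\dagger)$.
   Context: Dots denote $\partial_\theta$ at $\theta_0$. For a tensor $X=\sum_mX_m\otimes|m\rangle$ the $T$-site state is $|\Phi^X_T(\theta)\rangle=\sum_{\mathbf{m}}(\mathbb{1}_A\otimes X_{m_T}(\theta)\cdots X_{m_1}(\theta))|\xi\rangle\otimes|m_1\cdots m_T\rangle$, where $|\xi\rangle\in\mathbb{C}^D_A\otimes\mathbb{C}^D_S$ is a fixed $\theta$-independent purification of $\rho_{ss}$ (the translation-invariant MPS with boundary vectors identity and $\rho_{ss}$). Pure-state QFI is $4(\langle\dot\psi|\dot\psi\rangle-|\langle\dot\psi|\psi\rangle|^2)$. *)

theory Defs
  imports "HOL-Analysis.Analysis"
begin

definition cscale :: "complex \<Rightarrow> complex^'n^'m \<Rightarrow> complex^'n^'m" where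
  "cscale c A = (\<chi> i j. c * A $ i $ j)"

definition cadj :: "complex^'n^'m \<Rightarrow> complex^'m^'n" where
  "cadj A = (\<chi> i j. cnj (A $ j $ i))"

fun mpow :: "complex^'n^'n \<Rightarrow> nat \<Rightarrow> complex^'n^'n" where
  "mpow A 0 = mat 1"
| "mpow A (Suc n) = A ** mpow A n"

definition mexp :: "complex^'n^'n \<Rightarrow> complex^'n^'n" where
  "mexp A = (\<Sum>n. cscale (1 / of_nat (fact n)) (mpow A n))"

definition channel :: "('d \<Rightarrow> complex^'D^'D) \<Rightarrow> complex^'D^'D \<Rightarrow> complex^'D^'D" where
  "channel K X = (\<Sum>m\<in>UNIV. K m ** X ** cadj (K m))"

text \<open>Ordered product X_{m_T} ... X_{m_1} for the list [m_1, ..., m_T].\<close>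
fun lprod :: "('d \<Rightarrow> complex^'D^'D) \<Rightarrow> 'd list \<Rightarrow> complex^'D^'D" where
  "lprod X [] = mat 1"
| "lprod X (m # ms) = lprod X ms ** X m"

text \<open>Components of the T-site MPS state |Phi^X_T(theta)>, indexed by (a, s, [m_1,...,m_T]):
  sum_{s'} (X_{m_T}(theta) ... X_{m_1}(theta))_{s s'} xi_{a s'}.\<close>
definition mps_state :: "('d \<Rightarrow> real \<Rightarrow> complex^'D^'D) \<Rightarrow> ('D \<Rightarrow> 'D \<Rightarrow> complex)
    \<Rightarrow> real \<Rightarrow> 'D \<times> 'D \<times> 'd list \<Rightarrow> complex" where
  "mps_state X xi \<theta> = (\<lambda>(a, s, ms). \<Sum>s'\<in>UNIV. lprod (\<lambda>m. X m \<theta>) ms $ s $ s' * xi a s')"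

definition sites :: "nat \<Rightarrow> ('D::finite \<times> 'D \<times> 'd::finite list) set" where
  "sites T = {(a, s, ms). length ms = T}"

definition cinner :: "'i set \<Rightarrow> ('i \<Rightarrow> complex) \<Rightarrow> ('i \<Rightarrow> complex) \<Rightarrow> complex" where
  "cinner I f g = (\<Sum>x\<in>I. cnj (f x) * g x)"

definition pure_qfi :: "'i set \<Rightarrow> (real \<Rightarrow> 'i \<Rightarrow> complex) \<Rightarrow> real \<Rightarrow> complex" where
  "pure_qfi I \<psi> \<theta>0 =
     (let d\<psi> = (\<lambda>x. vector_derivative (\<lambda>\<theta>. \<psi> \<theta> x) (at \<theta>0))
      in 4 * (cinner I d\<psi> d\<psi> - complex_of_real ((cmod (cinner I d\<psi> (\<psi> \<theta>0)))\<^sup>2)))"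

end

theory Submission
  imports Defs
begin

(* Differentiating the Kraus normalisation shows that A = Sum_m K_m^dag dK_m is anti-Hermitian,
   so H_s = i A is Hermitian; by HKS it is a combination Sum_ij c_ij K_i^dag K_j, and symmetrising
   the coefficients gives a Hermitian h with A = i Sum_ij h_ij K_i^dag K_j.  Rotating the ancilla by
   u_theta = exp(i theta h) leaves the channel and the isometry condition unchanged and adds
   -i Sum_ij h_ij K_i^dag K_j to Sum_m W_m^dag dW_m, which therefore vanishes.  This gauge condition
   kills gamma and beta by cyclicity of the trace.  For the QFI, the Leibniz rule for
   d(W_{m_T} ... W_{m_1}) turns the sums over words of length T into recursions in T: the overlap
   <dPhi|Phi> stays 0, and <dPhi|dPhi> grows by alpha per site because rho_ss is a fixed point of
   the channel. *)

section \<open>Complex matrices\<close>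

lemma matrix_add_rdistrib: "(A + B) ** C = A ** C + B ** (C :: 'a::semiring_1^_^_)"
  by (simp add: vec_eq_iff matrix_matrix_mult_def sum.distrib distrib_right)

lemma matrix_sum_rdistrib: "(\<Sum>i\<in>S. F i) ** (C :: 'a::semiring_1^_^_) = (\<Sum>i\<in>S. F i ** C)"
  by (induction S rule: infinite_finite_induct) (simp_all add: matrix_add_rdistrib)

lemma matrix_sum_ldistrib: "(C :: 'a::semiring_1^_^_) ** (\<Sum>i\<in>S. F i) = (\<Sum>i\<in>S. C ** F i)"
  by (induction S rule: infinite_finite_induct) (simp_all add: matrix_add_ldistrib)

lemma norm_matrix_le_sum_entries:
  "norm (A :: 'a::real_normed_vector^'n^'m) \<le> (\<Sum>i\<in>UNIV. \<Sum>j\<in>UNIV. norm (A $ i $ j))"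
proof -
  have "norm A \<le> (\<Sum>i\<in>UNIV. norm (A $ i))"
    unfolding norm_vec_def by (rule L2_set_le_sum) simp
  also have "\<dots> \<le> (\<Sum>i\<in>UNIV. \<Sum>j\<in>UNIV. norm (A $ i $ j))"
    unfolding norm_vec_def by (intro sum_mono L2_set_le_sum) simp
  finally show ?thesis .
qed

lemma norm_matrix_entry_le: "norm (A $ i $ j) \<le> norm (A :: 'a::real_normed_vector^'n^'m)"
  by (meson Finite_Cartesian_Product.norm_nth_le order_trans)

lemma cscale_of_real: "cscale (of_real r) A = r *\<^sub>R A"
  by (simp add: cscale_def vec_eq_iff) (simp add: scaleR_conv_of_real)

lemma cscale_nth: "cscale a A $ i $ j = a * A $ i $ j"
  by (simp add: cscale_def)

lemma cscale_add_left: "cscale (a + b) A = cscale a A + cscale b A"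
  by (simp add: cscale_def vec_eq_iff distrib_right)

lemma cscale_add_right: "cscale a (A + B) = cscale a A + cscale a B"
  by (simp add: cscale_def vec_eq_iff distrib_left)

lemma cscale_sum_left: "cscale (\<Sum>i\<in>S. f i) A = (\<Sum>i\<in>S. cscale (f i) A)"
  by (induction S rule: infinite_finite_induct)
     (simp_all add: cscale_add_left, simp_all add: cscale_def vec_eq_iff)

lemma cscale_sum_right: "cscale a (\<Sum>i\<in>S. F i) = (\<Sum>i\<in>S. cscale a (F i))"
  by (induction S rule: infinite_finite_induct)
     (simp_all add: cscale_add_right, simp_all add: cscale_def vec_eq_iff)

lemma cscale_cscale: "cscale a (cscale b A) = cscale (a * b) A"
  by (simp add: cscale_def vec_eq_iff mult.assoc)

lemma cscale_1 [simp]: "cscale 1 A = A"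
  and cscale_0_left [simp]: "cscale 0 A = 0"
  by (simp_all add: cscale_def vec_eq_iff)

lemma cscale_minus_left: "cscale (- a) A = - cscale a A"
  by (simp add: cscale_def vec_eq_iff)

lemma cscale_matrix_mult_left: "cscale c A ** B = cscale c (A ** B)"
  by (simp add: cscale_def vec_eq_iff matrix_matrix_mult_def sum_distrib_left mult.assoc)

lemma cscale_matrix_mult_right: "A ** cscale c B = cscale c (A ** B)"
  by (simp add: cscale_def vec_eq_iff matrix_matrix_mult_def sum_distrib_left ac_simps)

lemma cadj_cadj [simp]: "cadj (cadj A) = A"
  by (simp add: cadj_def vec_eq_iff)

lemma cadj_0 [simp]: "cadj 0 = 0"
  and cadj_mat_1 [simp]: "cadj (mat 1) = mat 1"
  by (simp_all add: cadj_def mat_def vec_eq_iff)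

lemma cadj_add: "cadj (A + B) = cadj A + cadj B"
  by (simp add: cadj_def vec_eq_iff)

lemma cadj_sum: "cadj (\<Sum>i\<in>S. F i) = (\<Sum>i\<in>S. cadj (F i))"
  by (induction S rule: infinite_finite_induct) (simp_all add: cadj_add)

lemma cadj_cscale: "cadj (cscale c A) = cscale (cnj c) (cadj A)"
  by (simp add: cadj_def cscale_def vec_eq_iff)

lemma cadj_matrix_mult: "cadj (A ** B) = cadj B ** cadj A"
  by (simp add: cadj_def matrix_matrix_mult_def vec_eq_iff ac_simps)

lemma trace_zero [simp]: "trace (0 :: 'a::semiring_1^'n^'n) = 0"
  by (simp add: trace_def)

lemma trace_sum: "trace (\<Sum>i\<in>S. F i) = (\<Sum>i\<in>S. trace (F i :: complex^'n^'n))"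
  by (induction S rule: infinite_finite_induct) (simp_all add: trace_add)

lemma trace_cadj: "trace (cadj A) = cnj (trace A)"
  by (simp add: trace_def cadj_def)

lemma mpow_commute: "A ** mpow A n = mpow A n ** A"
  by (induction n) (simp_all add: matrix_mul_assoc)

lemma cadj_mpow: "cadj (mpow A n) = mpow (cadj A) n"
  by (induction n) (simp_all add: cadj_matrix_mult mpow_commute)

lemma bounded_linear_cadj: "bounded_linear (cadj :: complex^'n::finite^'m::finite \<Rightarrow> _)"
proof (rule bounded_linear_intro[where K = "of_nat (CARD('n) * CARD('m))"])
  fix A B :: "complex^'n^'m" and r :: real
  show "cadj (A + B) = cadj A + cadj B" by (rule cadj_add)
  show "cadj (r *\<^sub>R A) = r *\<^sub>R cadj A"
    by (simp add: cscale_of_real[symmetric] cadj_cscale)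
  have "norm (cadj A) \<le> (\<Sum>i\<in>UNIV. \<Sum>j\<in>UNIV. norm (cadj A $ i $ j))"
    by (rule norm_matrix_le_sum_entries)
  also have "\<dots> \<le> (\<Sum>i\<in>(UNIV::'n set). \<Sum>j\<in>(UNIV::'m set). norm A)"
    by (intro sum_mono) (simp add: cadj_def norm_matrix_entry_le)
  finally show "norm (cadj A) \<le> norm A * of_nat (CARD('n) * CARD('m))"
    by (simp add: ac_simps)
qed

lemma bounded_bilinear_matrix_mult:
  "bounded_bilinear ((**) :: complex^'n::finite^'m::finite \<Rightarrow> complex^'p::finite^'n \<Rightarrow> _)"
proof (rule bounded_bilinear.intro)
  fix A A' :: "complex^'n^'m" and B B' :: "complex^'p^'n" and r :: real
  show "(A + A') ** B = A ** B + A' ** B" by (rule matrix_add_rdistrib)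
  show "A ** (B + B') = A ** B + A ** B'" by (rule matrix_add_ldistrib)
  show "(r *\<^sub>R A) ** B = r *\<^sub>R (A ** B)" "A ** (r *\<^sub>R B) = r *\<^sub>R (A ** B)"
    by (simp_all add: cscale_of_real[symmetric] cscale_matrix_mult_left cscale_matrix_mult_right)
  have "norm (A ** B) \<le> norm A * norm B * of_nat (CARD('m) * CARD('p) * CARD('n))"
    for A :: "complex^'n^'m" and B :: "complex^'p^'n"
  proof -
    have "norm (A ** B) \<le> (\<Sum>i\<in>UNIV. \<Sum>j\<in>UNIV. norm ((A ** B) $ i $ j))"
      by (rule norm_matrix_le_sum_entries)
    also have "\<dots> \<le> (\<Sum>i\<in>(UNIV::'m set). \<Sum>j\<in>(UNIV::'p set). \<Sum>k\<in>(UNIV::'n set). norm A * norm B)"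
    proof (intro sum_mono)
      fix i j
      have "norm ((A ** B) $ i $ j) \<le> (\<Sum>k\<in>UNIV. norm (A $ i $ k * B $ k $ j))"
        by (simp add: matrix_matrix_mult_def norm_sum)
      also have "\<dots> \<le> (\<Sum>k\<in>(UNIV::'n set). norm A * norm B)"
        by (intro sum_mono) (simp add: norm_mult mult_mono norm_matrix_entry_le)
      finally show "norm ((A ** B) $ i $ j) \<le> (\<Sum>k\<in>(UNIV::'n set). norm A * norm B)" .
    qed
    finally show ?thesis by (simp add: ac_simps)
  qed
  then show "\<exists>K. \<forall>A B. norm ((A::complex^'n^'m) ** (B::complex^'p^'n)) \<le> norm A * norm B * K"
    by blast
qed

lemma bounded_bilinear_cscale: "bounded_bilinear (cscale :: complex \<Rightarrow> complex^'n::finite^'m::finite \<Rightarrow> _)"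
proof (rule bounded_bilinear.intro)
  fix a a' :: complex and A A' :: "complex^'n^'m" and r :: real
  show "cscale (a + a') A = cscale a A + cscale a' A" by (rule cscale_add_left)
  show "cscale a (A + A') = cscale a A + cscale a A'" by (rule cscale_add_right)
  show "cscale (r *\<^sub>R a) A = r *\<^sub>R cscale a A" "cscale a (r *\<^sub>R A) = r *\<^sub>R cscale a A"
    by (simp_all add: cscale_of_real[symmetric] cscale_cscale scaleR_conv_of_real mult.commute)
  have "norm (cscale a A) \<le> norm a * norm A * of_nat (CARD('m) * CARD('n))"
    for a :: complex and A :: "complex^'n^'m"
  proof -
    have "norm (cscale a A) \<le> (\<Sum>i\<in>UNIV. \<Sum>j\<in>UNIV. norm (cscale a A $ i $ j))"
      by (rule norm_matrix_le_sum_entries)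
    also have "\<dots> \<le> (\<Sum>i\<in>(UNIV::'m set). \<Sum>j\<in>(UNIV::'n set). norm a * norm A)"
      by (intro sum_mono) (simp add: cscale_def norm_mult mult_left_mono norm_matrix_entry_le)
    finally show ?thesis by (simp add: ac_simps)
  qed
  then show "\<exists>K. \<forall>a A. norm (cscale a A :: complex^'n^'m) \<le> norm a * norm A * K"
    by blast
qed

section \<open>The matrix exponential\<close>

lemma norm_entry_le_onorm: "norm (A $ i $ j) \<le> onorm ((*v) (A::complex^'n^'m))"
proof -
  have "A $ i $ j = (A *v axis j 1) $ i"
    by (simp add: matrix_vector_mult_def axis_def if_distrib cong: if_cong)
  also have "norm \<dots> \<le> norm (A *v axis j 1)" by (rule Finite_Cartesian_Product.norm_nth_le)
  also have "\<dots> \<le> onorm ((*v) A) * norm (axis j (1::complex))" by (rule onorm) simp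
  also have "norm (axis j (1::complex)) = 1" by (simp add: norm_Basis)
  finally show ?thesis by simp
qed

lemma onorm_le_sum_entries:
  "onorm ((*v) (A::complex^'n^'m)) \<le> (\<Sum>i\<in>UNIV. \<Sum>j\<in>UNIV. norm (A $ i $ j))"
proof (rule onorm_le)
  fix v :: "complex^'n"
  have "norm (A *v v) \<le> (\<Sum>i\<in>UNIV. norm ((A *v v) $ i))"
    unfolding norm_vec_def by (rule L2_set_le_sum) simp
  also have "\<dots> \<le> (\<Sum>i\<in>UNIV. \<Sum>j\<in>UNIV. norm (A $ i $ j) * norm v)"
  proof (rule sum_mono)
    fix i
    have "norm ((A *v v) $ i) \<le> (\<Sum>j\<in>UNIV. norm (A $ i $ j * v $ j))"
      unfolding matrix_vector_mult_def by (simp add: norm_sum)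
    also have "\<dots> \<le> (\<Sum>j\<in>UNIV. norm (A $ i $ j) * norm v)"
      by (intro sum_mono) (simp add: norm_mult mult_left_mono Finite_Cartesian_Product.norm_nth_le)
    finally show "norm ((A *v v) $ i) \<le> (\<Sum>j\<in>UNIV. norm (A $ i $ j) * norm v)" .
  qed
  finally show "norm (A *v v) \<le> (\<Sum>i\<in>UNIV. \<Sum>j\<in>UNIV. norm (A $ i $ j)) * norm v"
    by (simp add: sum_distrib_right)
qed

(* Square complex matrices under the operator norm form a Banach algebra, in which the
   library's exp is available; mexp is its image under Rep_cmat. *)
typedef ('n::finite) cmat = "UNIV :: (complex^'n^'n) set" by simp
setup_lifting type_definition_cmat

instantiation cmat :: (finite) real_normed_algebra_1
begin

lift_definition zero_cmat :: "'a cmat" is 0 .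
lift_definition one_cmat :: "'a cmat" is "mat 1" .
lift_definition plus_cmat :: "'a cmat \<Rightarrow> 'a cmat \<Rightarrow> 'a cmat" is "(+)" .
lift_definition minus_cmat :: "'a cmat \<Rightarrow> 'a cmat \<Rightarrow> 'a cmat" is "(-)" .
lift_definition uminus_cmat :: "'a cmat \<Rightarrow> 'a cmat" is uminus .
lift_definition times_cmat :: "'a cmat \<Rightarrow> 'a cmat \<Rightarrow> 'a cmat" is "(**)" .
lift_definition scaleR_cmat :: "real \<Rightarrow> 'a cmat \<Rightarrow> 'a cmat" is scaleR .
lift_definition norm_cmat :: "'a cmat \<Rightarrow> real" is "\<lambda>A. onorm ((*v) A)" .

definition dist_cmat :: "'a cmat \<Rightarrow> 'a cmat \<Rightarrow> real"
  where "dist_cmat A B = norm (A - B)"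
definition sgn_cmat :: "'a cmat \<Rightarrow> 'a cmat"
  where "sgn_cmat A = inverse (norm A) *\<^sub>R A"
definition uniformity_cmat :: "('a cmat \<times> 'a cmat) filter"
  where "uniformity_cmat = (INF e\<in>{0<..}. principal {(A, B). dist A B < e})"
definition open_cmat :: "'a cmat set \<Rightarrow> bool"
  where "open_cmat U = (\<forall>A\<in>U. \<forall>\<^sub>F (A', B) in uniformity. A' = A \<longrightarrow> B \<in> U)"

instance
proof
  fix A B C :: "'a cmat" and r s :: real
  show "A + B + C = A + (B + C)" by transfer (simp add: algebra_simps)
  show "A + B = B + A" by transfer (simp add: algebra_simps)
  show "0 + A = A" by transfer simp
  show "- A + A = 0" by transfer simp
  show "A - B = A + - B" by transfer simp
  show "r *\<^sub>R (A + B) = r *\<^sub>R A + r *\<^sub>R B" by transfer (rule scaleR_right_distrib)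
  show "(r + s) *\<^sub>R A = r *\<^sub>R A + s *\<^sub>R A" by transfer (rule scaleR_left_distrib)
  show "r *\<^sub>R s *\<^sub>R A = (r * s) *\<^sub>R A" by transfer simp
  show "1 *\<^sub>R A = A" by transfer simp
  show "A * B * C = A * (B * C)" by transfer (simp add: matrix_mul_assoc)
  show "(A + B) * C = A * C + B * C" by transfer (rule matrix_add_rdistrib)
  show "A * (B + C) = A * B + A * C" by transfer (rule matrix_add_ldistrib)
  show "r *\<^sub>R A * B = r *\<^sub>R (A * B)" "A * r *\<^sub>R B = r *\<^sub>R (A * B)"
    by (transfer; simp add: cscale_of_real[symmetric] cscale_matrix_mult_left cscale_matrix_mult_right)+
  show "1 * A = A" by transfer simp
  show "A * 1 = A" by transfer simp
  show "(0::'a cmat) \<noteq> 1" by transfer (simp add: vec_eq_iff mat_def)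
  show "dist A B = norm (A - B)" by (simp add: dist_cmat_def)
  show "sgn A = inverse (norm A) *\<^sub>R A" by (simp add: sgn_cmat_def)
  show "uniformity = (INF e\<in>{0<..}. principal {(A, B :: 'a cmat). dist A B < e})"
    by (simp add: uniformity_cmat_def)
  show "open U = (\<forall>A\<in>U. \<forall>\<^sub>F (A', B) in uniformity. A' = A \<longrightarrow> B \<in> U)" for U :: "'a cmat set"
    by (simp add: open_cmat_def)
  show "norm A = 0 \<longleftrightarrow> A = 0"
  proof transfer
    fix M :: "complex^'a^'a"
    show "onorm ((*v) M) = 0 \<longleftrightarrow> M = 0"
      using norm_entry_le_onorm[of M] onorm_le_sum_entries[of M]
      by (auto simp: vec_eq_iff intro: antisym onorm_pos_le)
  qed
  show "norm (A + B) \<le> norm A + norm B"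
  proof transfer
    fix M N :: "complex^'a^'a"
    have "(*v) (M + N) = (\<lambda>v. M *v v + N *v v)"
      by (simp add: fun_eq_iff matrix_vector_mult_add_rdistrib)
    then show "onorm ((*v) (M + N)) \<le> onorm ((*v) M) + onorm ((*v) N)"
      by (simp add: onorm_triangle)
  qed
  show "norm (r *\<^sub>R A) = \<bar>r\<bar> * norm A"
  proof transfer
    fix r and M :: "complex^'a^'a"
    have "(*v) (r *\<^sub>R M) = (\<lambda>v. r *\<^sub>R (M *v v))"
      by (simp add: fun_eq_iff vec_eq_iff matrix_vector_mult_def scaleR_sum_right)
    then show "onorm ((*v) (r *\<^sub>R M)) = \<bar>r\<bar> * onorm ((*v) M)"
      by (simp add: onorm_scaleR)
  qed
  show "norm (A * B) \<le> norm A * norm B"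
  proof transfer
    fix M N :: "complex^'a^'a"
    have "(*v) (M ** N) = (*v) M \<circ> (*v) N"
      by (simp add: fun_eq_iff matrix_vector_mul_assoc)
    then show "onorm ((*v) (M ** N)) \<le> onorm ((*v) M) * onorm ((*v) N)"
      by (simp add: onorm_compose)
  qed
  show "norm (1::'a cmat) = 1"
  proof transfer
    have "(*v) (mat 1 :: complex^'a^'a) = (\<lambda>v. v)"
      by (simp add: fun_eq_iff)
    then show "onorm ((*v) (mat 1 :: complex^'a^'a)) = 1"
      by (simp add: onorm_id)
  qed
qed

end

lemma bounded_linear_Rep_cmat: "bounded_linear (Rep_cmat :: 'n::finite cmat \<Rightarrow> _)"
proof (rule bounded_linear_intro[where K = "of_nat (CARD('n) * CARD('n))"])
  fix A B :: "'n cmat" and r :: real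
  show "Rep_cmat (A + B) = Rep_cmat A + Rep_cmat B" by transfer simp
  show "Rep_cmat (r *\<^sub>R A) = r *\<^sub>R Rep_cmat A" by transfer simp
  have "norm (Rep_cmat A) \<le> (\<Sum>i\<in>UNIV. \<Sum>j\<in>UNIV. norm (Rep_cmat A $ i $ j))"
    by (rule norm_matrix_le_sum_entries)
  also have "\<dots> \<le> (\<Sum>i\<in>(UNIV::'n set). \<Sum>j\<in>(UNIV::'n set). norm A)"
    by (intro sum_mono) (simp add: norm_cmat.rep_eq norm_entry_le_onorm)
  finally show "norm (Rep_cmat A) \<le> norm A * of_nat (CARD('n) * CARD('n))"
    by (simp add: ac_simps)
qed

lemma bounded_linear_Abs_cmat: "bounded_linear (Abs_cmat :: _ \<Rightarrow> 'n::finite cmat)"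
proof (rule bounded_linear_intro[where K = "of_nat (CARD('n) * CARD('n))"])
  fix A B :: "complex^'n^'n" and r :: real
  show "Abs_cmat (A + B) = Abs_cmat A + Abs_cmat B"
    by (simp add: plus_cmat_def Abs_cmat_inverse)
  show "Abs_cmat (r *\<^sub>R A) = r *\<^sub>R Abs_cmat A"
    by (simp add: scaleR_cmat_def Abs_cmat_inverse)
  have "norm (Abs_cmat A) \<le> (\<Sum>i\<in>UNIV. \<Sum>j\<in>UNIV. norm (A $ i $ j))"
    by (simp add: norm_cmat_def Abs_cmat_inverse onorm_le_sum_entries)
  also have "\<dots> \<le> (\<Sum>i\<in>(UNIV::'n set). \<Sum>j\<in>(UNIV::'n set). norm A)"
    by (intro sum_mono norm_matrix_entry_le)
  finally show "norm (Abs_cmat A) \<le> norm A * of_nat (CARD('n) * CARD('n))"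
    by (simp add: ac_simps)
qed

instance cmat :: (finite) banach
proof
  fix X :: "nat \<Rightarrow> 'a cmat"
  assume "Cauchy X"
  then have "Cauchy (\<lambda>n. Rep_cmat (X n))"
    by (rule bounded_linear.Cauchy[OF bounded_linear_Rep_cmat])
  then obtain L where "(\<lambda>n. Rep_cmat (X n)) \<longlonglongrightarrow> L"
    by (auto simp: Cauchy_convergent_iff convergent_def)
  then have "(\<lambda>n. Abs_cmat (Rep_cmat (X n))) \<longlonglongrightarrow> Abs_cmat L"
    by (rule bounded_linear.tendsto[OF bounded_linear_Abs_cmat])
  then show "convergent X"
    by (auto simp: Rep_cmat_inverse convergent_def)
qed

lemma Rep_cmat_power: "Rep_cmat (A ^ n) = mpow (Rep_cmat A) n"
  by (induction n) (simp_all add: one_cmat.rep_eq times_cmat.rep_eq)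

lemma mexp_eq_Rep_cmat_exp: "mexp A = Rep_cmat (exp (Abs_cmat A))"
  and sums_mexp: "(\<lambda>n. cscale (1 / of_nat (fact n)) (mpow A n)) sums mexp A"
proof -
  have "Rep_cmat (Abs_cmat A ^ n /\<^sub>R fact n) = cscale (1 / of_nat (fact n)) (mpow A n)" for n
    using cscale_of_real[of "inverse (fact n)" "mpow A n"]
    by (simp add: scaleR_cmat.rep_eq Rep_cmat_power Abs_cmat_inverse divide_inverse)
  moreover have "(\<lambda>n. Rep_cmat (Abs_cmat A ^ n /\<^sub>R fact n)) sums Rep_cmat (exp (Abs_cmat A))"
    by (rule bounded_linear.sums[OF bounded_linear_Rep_cmat exp_converges])
  ultimately have "(\<lambda>n. cscale (1 / of_nat (fact n)) (mpow A n)) sums Rep_cmat (exp (Abs_cmat A))"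
    by simp
  then show "mexp A = Rep_cmat (exp (Abs_cmat A))"
    and "(\<lambda>n. cscale (1 / of_nat (fact n)) (mpow A n)) sums mexp A"
    by (simp_all add: mexp_def sums_iff)
qed

lemma mexp_mult_mexp_uminus: "mexp A ** mexp (- A) = mat 1"
proof -
  have "Abs_cmat (- A) = - Abs_cmat A"
    by (simp add: uminus_cmat_def Abs_cmat_inverse)
  then show ?thesis
    by (simp add: mexp_eq_Rep_cmat_exp times_cmat.rep_eq[symmetric] exp_minus_inverse one_cmat.rep_eq)
qed

lemma cadj_mexp: "cadj (mexp A) = mexp (cadj A)"
proof -
  have "(\<lambda>n. cadj (cscale (1 / of_nat (fact n)) (mpow A n))) sums cadj (mexp A)"
    by (rule bounded_linear.sums[OF bounded_linear_cadj sums_mexp])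
  then have "(\<lambda>n. cscale (1 / of_nat (fact n)) (mpow (cadj A) n)) sums cadj (mexp A)"
    by (simp add: cadj_cscale cadj_mpow)
  then show ?thesis
    using sums_mexp sums_unique2 by blast
qed

lemma has_vector_derivative_mexp:
  "((\<lambda>t. mexp (cscale (of_real t) B)) has_vector_derivative mexp (cscale (of_real t) B) ** B) (at t)"
proof -
  have exp_eq: "mexp (cscale (of_real t) B) = Rep_cmat (exp (t *\<^sub>R Abs_cmat B))" for t
    by (simp add: mexp_eq_Rep_cmat_exp cscale_of_real scaleR_cmat_def Abs_cmat_inverse)
  have "((\<lambda>t. Rep_cmat (exp (t *\<^sub>R Abs_cmat B))) has_vector_derivative
      Rep_cmat (exp (t *\<^sub>R Abs_cmat B) * Abs_cmat B)) (at t)"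
    by (rule bounded_linear.has_vector_derivative[OF bounded_linear_Rep_cmat
          exp_scaleR_has_vector_derivative_right])
  then show ?thesis
    by (simp add: exp_eq times_cmat.rep_eq Abs_cmat_inverse)
qed

section \<open>Unitary mixing of Kraus operators\<close>

(* The Kraus operators of (1_D (x) U) V, where V = Sum_m K_m (x) |m>. *)
definition kraus_mix :: "complex^'d^'d \<Rightarrow> ('d \<Rightarrow> complex^'D^'D) \<Rightarrow> 'd \<Rightarrow> complex^'D^'D"
  where "kraus_mix U K m = (\<Sum>k\<in>UNIV. cscale (U $ m $ k) (K k))"

lemma sum_cscale_mat_1:
  "(\<Sum>k\<in>UNIV. cscale (mat 1 $ l $ k) (F k)) = F l"
  "(\<Sum>k\<in>UNIV. cscale (mat 1 $ k $ l) (F k)) = F l"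
  by (simp_all add: mat_def if_distrib[of "\<lambda>c. cscale c _"] cong: if_cong)

lemma kraus_mix_mat_1 [simp]: "kraus_mix (mat 1) K = K"
  by (simp add: fun_eq_iff kraus_mix_def sum_cscale_mat_1)

lemma kraus_mix_kraus_mix: "kraus_mix P (kraus_mix Q K) = kraus_mix (P ** Q) K"
proof
  fix m
  have "kraus_mix P (kraus_mix Q K) m = (\<Sum>k\<in>UNIV. \<Sum>l\<in>UNIV. cscale (P $ m $ k * Q $ k $ l) (K l))"
    by (simp add: kraus_mix_def cscale_sum_right cscale_cscale)
  also have "\<dots> = (\<Sum>l\<in>UNIV. \<Sum>k\<in>UNIV. cscale (P $ m $ k * Q $ k $ l) (K l))"
    by (rule sum.swap)
  also have "\<dots> = kraus_mix (P ** Q) K m"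
    by (simp add: kraus_mix_def matrix_matrix_mult_def cscale_sum_left)
  finally show "kraus_mix P (kraus_mix Q K) m = kraus_mix (P ** Q) K m" .
qed

lemma sum_swap3: "(\<Sum>a\<in>A. \<Sum>b\<in>B. \<Sum>c\<in>C. f a b c) = (\<Sum>b\<in>B. \<Sum>c\<in>C. \<Sum>a\<in>A. f a b c)"
  by (simp add: sum.swap[of _ A] sum.swap[of _ A B])

lemma sum_cadj_kraus_mix_mult:
  "(\<Sum>m\<in>UNIV. cadj (kraus_mix P X m) ** kraus_mix Q Y m)
     = (\<Sum>l\<in>UNIV. \<Sum>k\<in>UNIV. cscale ((cadj P ** Q) $ l $ k) (cadj (X l) ** Y k))"
proof -
  have "(\<Sum>m\<in>UNIV. cadj (kraus_mix P X m) ** kraus_mix Q Y m)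
      = (\<Sum>m\<in>UNIV. \<Sum>l\<in>UNIV. \<Sum>k\<in>UNIV. cscale (Q $ m $ k * cnj (P $ m $ l)) (cadj (X l) ** Y k))"
    by (simp add: kraus_mix_def cadj_sum cadj_cscale matrix_sum_rdistrib matrix_sum_ldistrib
        cscale_matrix_mult_left cscale_matrix_mult_right cscale_sum_right cscale_cscale)
       (intro sum.cong refl sum.swap)
  also have "\<dots> = (\<Sum>l\<in>UNIV. \<Sum>k\<in>UNIV. \<Sum>m\<in>UNIV. cscale (Q $ m $ k * cnj (P $ m $ l)) (cadj (X l) ** Y k))"
    by (rule sum_swap3)
  also have "\<dots> = (\<Sum>l\<in>UNIV. \<Sum>k\<in>UNIV. cscale ((cadj P ** Q) $ l $ k) (cadj (X l) ** Y k))"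
    by (simp add: matrix_matrix_mult_def cscale_sum_left cadj_def mult.commute)
  finally show ?thesis .
qed

lemma sum_kraus_mix_sandwich:
  "(\<Sum>m\<in>UNIV. kraus_mix P X m ** Z ** cadj (kraus_mix Q Y m))
     = (\<Sum>l\<in>UNIV. \<Sum>k\<in>UNIV. cscale ((cadj Q ** P) $ l $ k) (X k ** Z ** cadj (Y l)))"
proof -
  have "(\<Sum>m\<in>UNIV. kraus_mix P X m ** Z ** cadj (kraus_mix Q Y m))
      = (\<Sum>m\<in>UNIV. \<Sum>l\<in>UNIV. \<Sum>k\<in>UNIV. cscale (cnj (Q $ m $ l) * P $ m $ k) (X k ** Z ** cadj (Y l)))"
    by (simp add: kraus_mix_def cadj_sum cadj_cscale matrix_sum_rdistrib matrix_sum_ldistrib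
        cscale_matrix_mult_left cscale_matrix_mult_right cscale_sum_right cscale_cscale mult.commute)
  also have "\<dots> = (\<Sum>l\<in>UNIV. \<Sum>k\<in>UNIV. \<Sum>m\<in>UNIV. cscale (cnj (Q $ m $ l) * P $ m $ k) (X k ** Z ** cadj (Y l)))"
    by (rule sum_swap3)
  also have "\<dots> = (\<Sum>l\<in>UNIV. \<Sum>k\<in>UNIV. cscale ((cadj Q ** P) $ l $ k) (X k ** Z ** cadj (Y l)))"
    by (simp add: matrix_matrix_mult_def cscale_sum_left cadj_def)
  finally show ?thesis .
qed

lemma sum_cadj_kraus_mix_unitary:
  assumes "cadj U ** U = mat 1"
  shows "(\<Sum>m\<in>UNIV. cadj (kraus_mix U X m) ** kraus_mix U Y m) = (\<Sum>m\<in>UNIV. cadj (X m) ** Y m)"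
  by (simp add: sum_cadj_kraus_mix_mult assms sum_cscale_mat_1)

lemma channel_kraus_mix_unitary:
  assumes "cadj U ** U = mat 1"
  shows "channel (kraus_mix U K) = channel K"
  by (simp add: fun_eq_iff channel_def sum_kraus_mix_sandwich assms sum_cscale_mat_1)

lemma has_vector_derivative_kraus_mix:
  fixes U :: "real \<Rightarrow> complex^'d::finite^'d" and K :: "'d \<Rightarrow> real \<Rightarrow> complex^'D::finite^'D"
  assumes "(U has_vector_derivative U') (at t)"
    and "\<And>k. (K k has_vector_derivative K' k) (at t)"
  shows "((\<lambda>\<theta>. kraus_mix (U \<theta>) (\<lambda>k. K k \<theta>) m) has_vector_derivative
           kraus_mix (U t) K' m + kraus_mix U' (\<lambda>k. K k t) m) (at t)"
proof -
  have entry: "((\<lambda>\<theta>. U \<theta> $ m $ k) has_vector_derivative U' $ m $ k) (at t)" for k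
    by (intro bounded_linear.has_vector_derivative[OF bounded_linear_vec_nth] assms(1))
  show ?thesis
    unfolding kraus_mix_def sum.distrib[symmetric]
    by (intro has_vector_derivative_sum
        bounded_bilinear.has_vector_derivative[OF bounded_bilinear_cscale] entry assms(2))
qed

section \<open>Matrix product states of a gauge-fixed isometry\<close>

lemma trace_sandwich_sum:
  "trace (A ** (\<Sum>m\<in>S. F m) ** (B :: complex^'n::finite^'n)) = (\<Sum>m\<in>S. trace (A ** F m ** B))"
  by (simp add: matrix_sum_ldistrib matrix_sum_rdistrib trace_sum)

fun lprod_deriv :: "('d \<Rightarrow> complex^'D^'D) \<Rightarrow> ('d \<Rightarrow> complex^'D^'D) \<Rightarrow> 'd list \<Rightarrow> complex^'D^'D"
  where
    "lprod_deriv X dX [] = 0"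
  | "lprod_deriv X dX (m # ms) = lprod_deriv X dX ms ** X m + lprod X ms ** dX m"

lemma has_vector_derivative_lprod:
  fixes X :: "'d \<Rightarrow> real \<Rightarrow> complex^'D::finite^'D"
  assumes "\<And>m. (X m has_vector_derivative dX m) (at t)"
  shows "((\<lambda>\<theta>. lprod (\<lambda>m. X m \<theta>) ms) has_vector_derivative lprod_deriv (\<lambda>m. X m t) dX ms) (at t)"
proof (induction ms)
  case Nil
  then show ?case by (simp add: has_vector_derivative_const)
next
  case (Cons m ms)
  have "((\<lambda>\<theta>. lprod (\<lambda>m. X m \<theta>) ms ** X m \<theta>) has_vector_derivative
      lprod (\<lambda>m. X m t) ms ** dX m + lprod_deriv (\<lambda>m. X m t) dX ms ** X m t) (at t)"
    by (rule bounded_bilinear.has_vector_derivative[OF bounded_bilinear_matrix_mult Cons assms])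
  then show ?case by (simp add: add.commute)
qed

lemma sum_length_Suc:
  "(\<Sum>ms | length ms = Suc T. f ms) = (\<Sum>m\<in>UNIV. \<Sum>ms | length ms = T. f (m # ms :: 'a::finite list))"
proof -
  have words: "{ms. length ms = Suc T} = (\<lambda>(m, ms). m # ms) ` (UNIV \<times> {ms. length ms = T})"
    by (auto simp: length_Suc_conv)
  have "inj_on (\<lambda>(m, ms). m # ms) (UNIV \<times> {ms :: 'a list. length ms = T})"
    by (auto simp: inj_on_def)
  then show ?thesis
    unfolding words by (simp add: sum.reindex sum.cartesian_product split_def)
qed

locale gauge_fixed_isometry =
  fixes w dw :: "'d::finite \<Rightarrow> complex^'D::finite^'D"
  assumes isometry: "(\<Sum>m\<in>UNIV. cadj (w m) ** w m) = mat 1"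
    and gauge: "(\<Sum>m\<in>UNIV. cadj (w m) ** dw m) = 0"
begin

lemma trace_channel: "trace (channel w X) = trace X"
proof -
  have "trace (channel w X) = (\<Sum>m\<in>UNIV. trace (cadj (w m) ** w m ** X))"
    by (simp add: channel_def trace_sum trace_mul_sym[of _ "cadj _"] matrix_mul_assoc)
  also have "\<dots> = trace X"
    by (simp add: trace_sum[symmetric] matrix_sum_rdistrib[symmetric] isometry)
  finally show ?thesis .
qed

lemma sum_trace_gauge: "(\<Sum>m\<in>UNIV. trace (w m ** X ** cadj (dw m))) = 0"
proof -
  have "(\<Sum>m\<in>UNIV. trace (w m ** X ** cadj (dw m)))
      = (\<Sum>m\<in>UNIV. trace (cadj (cadj (w m) ** dw m) ** X))"
    by (simp add: trace_mul_sym[of "w _ ** X"] cadj_matrix_mult matrix_mul_assoc)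
  also have "\<dots> = 0"
    by (simp add: trace_sum[symmetric] matrix_sum_rdistrib[symmetric] cadj_sum[symmetric] gauge)
  finally show ?thesis .
qed

lemma trace_sum_gauge: "trace (\<Sum>m\<in>UNIV. dw m ** X ** cadj (w m)) = 0"
proof -
  have "trace (\<Sum>m\<in>UNIV. dw m ** X ** cadj (w m))
      = (\<Sum>m\<in>UNIV. trace (cadj (w m) ** dw m ** X))"
    by (simp add: trace_sum trace_mul_sym[of "dw _ ** X"] matrix_mul_assoc)
  also have "\<dots> = 0"
    by (simp add: trace_sum[symmetric] matrix_sum_rdistrib[symmetric] gauge)
  finally show ?thesis .
qed

lemma sum_words_trace_lprod:
  "(\<Sum>ms | length ms = T. trace (lprod w ms ** X ** cadj (lprod w ms))) = trace X"
proof (induction T arbitrary: X)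
  case 0
  then show ?case by simp
next
  case (Suc T)
  have "(\<Sum>ms | length ms = Suc T. trace (lprod w ms ** X ** cadj (lprod w ms)))
      = (\<Sum>ms | length ms = T. \<Sum>m\<in>UNIV. trace (lprod w ms ** (w m ** X ** cadj (w m)) ** cadj (lprod w ms)))"
    by (subst sum_length_Suc, subst sum.swap) (simp add: cadj_matrix_mult matrix_mul_assoc)
  also have "\<dots> = (\<Sum>ms | length ms = T. trace (lprod w ms ** channel w X ** cadj (lprod w ms)))"
    by (simp add: channel_def trace_sandwich_sum)
  finally show ?case by (simp add: Suc trace_channel)
qed

lemma sum_words_trace_lprod_lprod_deriv:
  "(\<Sum>ms | length ms = T. trace (lprod w ms ** X ** cadj (lprod_deriv w dw ms))) = 0"
proof (induction T arbitrary: X)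
  case 0
  then show ?case by simp
next
  case (Suc T)
  have "(\<Sum>ms | length ms = Suc T. trace (lprod w ms ** X ** cadj (lprod_deriv w dw ms)))
      = (\<Sum>ms | length ms = T. \<Sum>m\<in>UNIV.
           trace (lprod w ms ** (w m ** X ** cadj (w m)) ** cadj (lprod_deriv w dw ms))
         + trace (lprod w ms ** (w m ** X ** cadj (dw m)) ** cadj (lprod w ms)))"
    by (subst sum_length_Suc, subst sum.swap)
       (simp add: cadj_add cadj_matrix_mult matrix_add_ldistrib matrix_mul_assoc trace_add)
  also have "\<dots> = (\<Sum>ms | length ms = T. trace (lprod w ms ** channel w X ** cadj (lprod_deriv w dw ms)))
      + (\<Sum>ms | length ms = T. trace (lprod w ms ** (\<Sum>m\<in>UNIV. w m ** X ** cadj (dw m)) ** cadj (lprod w ms)))"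
    by (simp add: channel_def trace_sandwich_sum sum.distrib)
  finally show ?case
    by (simp add: Suc sum_words_trace_lprod trace_sum sum_trace_gauge)
qed

lemma sum_words_trace_lprod_deriv_lprod:
  "(\<Sum>ms | length ms = T. trace (lprod_deriv w dw ms ** X ** cadj (lprod w ms))) = 0"
proof -
  have "(\<Sum>ms | length ms = T. trace (lprod_deriv w dw ms ** X ** cadj (lprod w ms)))
      = cnj (\<Sum>ms | length ms = T. trace (lprod w ms ** cadj X ** cadj (lprod_deriv w dw ms)))"
    by (simp add: trace_cadj[symmetric] cadj_matrix_mult matrix_mul_assoc)
  then show ?thesis
    by (simp add: sum_words_trace_lprod_lprod_deriv)
qed

lemma sum_words_trace_lprod_deriv_lprod_deriv:
  assumes "channel w \<rho> = \<rho>"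
  shows "(\<Sum>ms | length ms = T. trace (lprod_deriv w dw ms ** \<rho> ** cadj (lprod_deriv w dw ms)))
           = of_nat T * (\<Sum>m\<in>UNIV. trace (dw m ** \<rho> ** cadj (dw m)))"
proof (induction T)
  case 0
  then show ?case by simp
next
  case (Suc T)
  let ?D = "lprod_deriv w dw" and ?P = "lprod w"
  have "(\<Sum>ms | length ms = Suc T. trace (?D ms ** \<rho> ** cadj (?D ms)))
      = (\<Sum>ms | length ms = T. \<Sum>m\<in>UNIV.
           trace (?D ms ** (w m ** \<rho> ** cadj (w m)) ** cadj (?D ms))
         + trace (?P ms ** (dw m ** \<rho> ** cadj (w m)) ** cadj (?D ms))
         + trace (?D ms ** (w m ** \<rho> ** cadj (dw m)) ** cadj (?P ms))
         + trace (?P ms ** (dw m ** \<rho> ** cadj (dw m)) ** cadj (?P ms)))"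
    by (subst sum_length_Suc, subst sum.swap)
       (simp add: cadj_add cadj_matrix_mult matrix_add_ldistrib matrix_add_rdistrib
         matrix_mul_assoc trace_add add.assoc)
  also have "\<dots> = (\<Sum>ms | length ms = T. trace (?D ms ** channel w \<rho> ** cadj (?D ms)))
      + (\<Sum>ms | length ms = T. trace (?P ms ** (\<Sum>m\<in>UNIV. dw m ** \<rho> ** cadj (w m)) ** cadj (?D ms)))
      + (\<Sum>ms | length ms = T. trace (?D ms ** (\<Sum>m\<in>UNIV. w m ** \<rho> ** cadj (dw m)) ** cadj (?P ms)))
      + (\<Sum>ms | length ms = T. trace (?P ms ** (\<Sum>m\<in>UNIV. dw m ** \<rho> ** cadj (dw m)) ** cadj (?P ms)))"
    by (simp add: channel_def trace_sandwich_sum sum.distrib)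
  \<comment> \<open>the two cross terms vanish, and the fixed point \<rho> reproduces the length-T sum\<close>
  finally show ?case
    by (simp add: Suc assms sum_words_trace_lprod sum_words_trace_lprod_lprod_deriv
        sum_words_trace_lprod_deriv_lprod trace_sum distrib_right)
qed

end

lemma sum_purification_trace:
  fixes X Y :: "complex^'D::finite^'D" and \<xi> :: "'A::finite \<Rightarrow> 'D \<Rightarrow> complex"
  assumes \<rho>: "\<And>s s'. \<rho> $ s $ s' = (\<Sum>a\<in>UNIV. \<xi> a s * cnj (\<xi> a s'))"
  shows "(\<Sum>a\<in>UNIV. \<Sum>s\<in>UNIV. cnj (\<Sum>s'\<in>UNIV. X $ s $ s' * \<xi> a s') * (\<Sum>s'\<in>UNIV. Y $ s $ s' * \<xi> a s'))
           = trace (Y ** \<rho> ** cadj X)"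
proof -
  have "trace (Y ** \<rho> ** cadj X)
      = (\<Sum>s\<in>UNIV. \<Sum>k\<in>UNIV. \<Sum>l\<in>UNIV. \<Sum>a\<in>UNIV. Y $ s $ l * \<xi> a l * cnj (\<xi> a k) * cnj (X $ s $ k))"
    by (simp add: trace_def matrix_matrix_mult_def cadj_def \<rho> sum_distrib_left sum_distrib_right ac_simps)
  also have "\<dots> = (\<Sum>a\<in>UNIV. \<Sum>s\<in>UNIV. \<Sum>k\<in>UNIV. \<Sum>l\<in>UNIV. Y $ s $ l * \<xi> a l * cnj (\<xi> a k) * cnj (X $ s $ k))"
    by (simp add: sum.swap[of _ UNIV "UNIV :: 'A set"])
  also have "\<dots> = (\<Sum>a\<in>UNIV. \<Sum>s\<in>UNIV. cnj (\<Sum>s'\<in>UNIV. X $ s $ s' * \<xi> a s') * (\<Sum>s'\<in>UNIV. Y $ s $ s' * \<xi> a s'))"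
    by (simp add: sum_distrib_left sum_distrib_right ac_simps)
  finally show ?thesis by simp
qed

lemma cinner_mps_vectors:
  fixes F G :: "'d::finite list \<Rightarrow> complex^'D::finite^'D" and \<xi> :: "'D \<Rightarrow> 'D \<Rightarrow> complex"
  assumes \<rho>: "\<And>s s'. \<rho> $ s $ s' = (\<Sum>a\<in>UNIV. \<xi> a s * cnj (\<xi> a s'))"
  shows "cinner (sites T)
           (\<lambda>(a, s, ms). \<Sum>s'\<in>UNIV. F ms $ s $ s' * \<xi> a s')
           (\<lambda>(a, s, ms). \<Sum>s'\<in>UNIV. G ms $ s $ s' * \<xi> a s')
         = (\<Sum>ms | length ms = T. trace (G ms ** \<rho> ** cadj (F ms)))"
proof -
  have sites: "sites T = (UNIV :: 'D set) \<times> (UNIV :: 'D set) \<times> {ms :: 'd list. length ms = T}"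
    by (auto simp: sites_def)
  have "cinner (sites T)
           (\<lambda>(a, s, ms). \<Sum>s'\<in>UNIV. F ms $ s $ s' * \<xi> a s')
           (\<lambda>(a, s, ms). \<Sum>s'\<in>UNIV. G ms $ s $ s' * \<xi> a s')
      = (\<Sum>a\<in>UNIV. \<Sum>s\<in>UNIV. \<Sum>ms | length ms = T.
           cnj (\<Sum>s'\<in>UNIV. F ms $ s $ s' * \<xi> a s') * (\<Sum>s'\<in>UNIV. G ms $ s $ s' * \<xi> a s'))"
    unfolding cinner_def sites by (simp add: sum.cartesian_product split_def)
  also have "\<dots> = (\<Sum>ms | length ms = T. \<Sum>a\<in>UNIV. \<Sum>s\<in>UNIV.
           cnj (\<Sum>s'\<in>UNIV. F ms $ s $ s' * \<xi> a s') * (\<Sum>s'\<in>UNIV. G ms $ s $ s' * \<xi> a s'))"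
    by (rule sum_swap3[symmetric])
  also have "\<dots> = (\<Sum>ms | length ms = T. trace (G ms ** \<rho> ** cadj (F ms)))"
    by (simp only: sum_purification_trace[OF \<rho>])
  finally show ?thesis .
qed

lemma pure_qfi_mps_state:
  fixes W :: "'d::finite \<Rightarrow> real \<Rightarrow> complex^'D::finite^'D" and \<xi> :: "'D \<Rightarrow> 'D \<Rightarrow> complex"
  assumes deriv: "\<And>m. (W m has_vector_derivative dW m) (at \<theta>0)"
    and gauge_fixed: "gauge_fixed_isometry (\<lambda>m. W m \<theta>0) dW"
    and fixed_point: "channel (\<lambda>m. W m \<theta>0) \<rho> = \<rho>"
    and \<rho>: "\<And>s s'. \<rho> $ s $ s' = (\<Sum>a\<in>UNIV. \<xi> a s * cnj (\<xi> a s'))"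
  shows "pure_qfi (sites T) (mps_state W \<xi>) \<theta>0
           = 4 * of_nat T * (\<Sum>m\<in>UNIV. trace (dW m ** \<rho> ** cadj (dW m)))"
proof -
  interpret gauge_fixed_isometry "\<lambda>m. W m \<theta>0" dW by (fact gauge_fixed)
  let ?P = "lprod (\<lambda>m. W m \<theta>0)" and ?D = "lprod_deriv (\<lambda>m. W m \<theta>0) dW"
  have "vector_derivative (\<lambda>\<theta>. mps_state W \<xi> \<theta> (a, s, ms)) (at \<theta>0)
      = (\<Sum>s'\<in>UNIV. ?D ms $ s $ s' * \<xi> a s')" for a s ms
  proof -
    have "((\<lambda>\<theta>. lprod (\<lambda>m. W m \<theta>) ms $ s $ s') has_vector_derivative ?D ms $ s $ s') (at \<theta>0)" for s'
      by (intro bounded_linear.has_vector_derivative[OF bounded_linear_vec_nth]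
          has_vector_derivative_lprod deriv)
    then have "((\<lambda>\<theta>. mps_state W \<xi> \<theta> (a, s, ms)) has_vector_derivative
        (\<Sum>s'\<in>UNIV. ?D ms $ s $ s' * \<xi> a s')) (at \<theta>0)"
      unfolding mps_state_def
      by (auto intro!: has_vector_derivative_sum has_vector_derivative_mult_left)
    then show ?thesis by (rule vector_derivative_at)
  qed
  then have d\<psi>: "(\<lambda>x. vector_derivative (\<lambda>\<theta>. mps_state W \<xi> \<theta> x) (at \<theta>0))
      = (\<lambda>(a, s, ms). \<Sum>s'\<in>UNIV. ?D ms $ s $ s' * \<xi> a s')"
    by auto
  have \<psi>: "mps_state W \<xi> \<theta>0 = (\<lambda>(a, s, ms). \<Sum>s'\<in>UNIV. ?P ms $ s $ s' * \<xi> a s')"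
    by (simp add: mps_state_def)
  show ?thesis
    unfolding pure_qfi_def Let_def d\<psi> \<psi> cinner_mps_vectors[OF \<rho>]
    by (simp add: sum_words_trace_lprod_deriv_lprod_deriv fixed_point sum_words_trace_lprod_lprod_deriv)
qed

section \<open>Gauge fixing under the HKS condition\<close>

lemma sum_cadj_deriv_skew_hermitian:
  fixes K :: "'d::finite \<Rightarrow> real \<Rightarrow> complex^'D::finite^'D"
  assumes deriv: "\<And>m. (K m has_vector_derivative K' m) (at t)"
    and kraus: "\<And>\<theta>. (\<Sum>m\<in>UNIV. cadj (K m \<theta>) ** K m \<theta>) = mat 1"
  shows "cadj (\<Sum>m\<in>UNIV. cadj (K m t) ** K' m) = - (\<Sum>m\<in>UNIV. cadj (K m t) ** K' m)"
proof -
  have "((\<lambda>\<theta>. \<Sum>m\<in>UNIV. cadj (K m \<theta>) ** K m \<theta>) has_vector_derivative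
      (\<Sum>m\<in>UNIV. cadj (K m t) ** K' m + cadj (K' m) ** K m t)) (at t)"
    by (intro has_vector_derivative_sum bounded_bilinear.has_vector_derivative[OF bounded_bilinear_matrix_mult]
        bounded_linear.has_vector_derivative[OF bounded_linear_cadj] deriv)
  moreover have "((\<lambda>\<theta>. \<Sum>m\<in>UNIV. cadj (K m \<theta>) ** K m \<theta>) has_vector_derivative 0) (at t)"
    unfolding kraus by (rule has_vector_derivative_const)
  ultimately have "(\<Sum>m\<in>UNIV. cadj (K m t) ** K' m + cadj (K' m) ** K m t) = 0"
    by (rule vector_derivative_unique_at)
  then show ?thesis
    by (simp add: sum.distrib cadj_sum cadj_matrix_mult eq_neg_iff_add_eq_0 add.commute)
qed

lemma hermitian_coeffs_in_span:
  fixes X :: "'d::finite \<Rightarrow> complex^'D::finite^'D"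
  assumes herm: "cadj H = H"
    and span: "H = (\<Sum>i\<in>UNIV. \<Sum>j\<in>UNIV. cscale (c i j) (cadj (X i) ** X j))"
  shows "\<exists>h. cadj h = h \<and> H = (\<Sum>i\<in>UNIV. \<Sum>j\<in>UNIV. cscale (h $ i $ j) (cadj (X i) ** X j))"
proof (intro exI conjI)
  define h :: "complex^'d^'d" where "h = (\<chi> i j. (c i j + cnj (c j i)) / 2)"
  show "cadj h = h"
    by (simp add: h_def cadj_def vec_eq_iff add.commute)
  have "H = cadj H" by (simp add: herm)
  also have "\<dots> = (\<Sum>i\<in>UNIV. \<Sum>j\<in>UNIV. cscale (cnj (c i j)) (cadj (X j) ** X i))"
    by (subst span) (simp add: cadj_sum cadj_cscale cadj_matrix_mult)
  also have "\<dots> = (\<Sum>i\<in>UNIV. \<Sum>j\<in>UNIV. cscale (cnj (c j i)) (cadj (X i) ** X j))"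
    by (rule sum.swap)
  finally have conj: "H = \<dots>" .
  have "H = cscale (1 / 2) (H + H)"
    by (simp add: cscale_def vec_eq_iff)
  also have "H + H = (\<Sum>i\<in>UNIV. \<Sum>j\<in>UNIV. cscale (c i j) (cadj (X i) ** X j))
      + (\<Sum>i\<in>UNIV. \<Sum>j\<in>UNIV. cscale (cnj (c j i)) (cadj (X i) ** X j))"
    using span conj by (metis (no_types))
  finally have "H = cscale (1 / 2) (\<Sum>i\<in>UNIV. \<Sum>j\<in>UNIV. cscale (c i j + cnj (c j i)) (cadj (X i) ** X j))"
    by (simp add: cscale_add_left sum.distrib)
  then show "H = (\<Sum>i\<in>UNIV. \<Sum>j\<in>UNIV. cscale (h $ i $ j) (cadj (X i) ** X j))"
    by (simp add: h_def cscale_sum_right cscale_cscale)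
qed

lemma hks_hermitian_generator:
  fixes K :: "'d::finite \<Rightarrow> real \<Rightarrow> complex^'D::finite^'D"
  assumes deriv: "\<And>m. (K m has_vector_derivative K' m) (at t)"
    and kraus: "\<And>\<theta>. (\<Sum>m\<in>UNIV. cadj (K m \<theta>) ** K m \<theta>) = mat 1"
    and HKS: "cscale \<i> (\<Sum>m\<in>UNIV. cadj (K m t) ** K' m)
                = (\<Sum>i\<in>UNIV. \<Sum>j\<in>UNIV. cscale (c i j) (cadj (K i t) ** K j t))"
  shows "\<exists>h. cadj h = h \<and>
           (\<Sum>m\<in>UNIV. cadj (K m t) ** K' m)
             = cscale \<i> (\<Sum>i\<in>UNIV. \<Sum>j\<in>UNIV. cscale (h $ i $ j) (cadj (K i t) ** K j t))"
proof -
  define A where "A = (\<Sum>m\<in>UNIV. cadj (K m t) ** K' m)"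
  have "cadj A = - A"
    unfolding A_def by (rule sum_cadj_deriv_skew_hermitian[OF deriv kraus])
  then have "cadj (cscale \<i> A) = cscale \<i> A"
    by (simp add: cadj_cscale) (simp add: cscale_def vec_eq_iff)
  then obtain h0 where herm: "cadj h0 = h0"
    and span: "cscale \<i> A = (\<Sum>i\<in>UNIV. \<Sum>j\<in>UNIV. cscale (h0 $ i $ j) (cadj (K i t) ** K j t))"
    using hermitian_coeffs_in_span[of "cscale \<i> A", OF _ HKS[folded A_def]] by blast
  show ?thesis
  proof (intro exI conjI)
    show "cadj (- h0) = - h0"
      using herm by (simp add: cadj_def vec_eq_iff)
    have "A = cscale (- \<i>) (cscale \<i> A)"
      by (simp add: cscale_cscale)
    also have "\<dots> = cscale \<i> (\<Sum>i\<in>UNIV. \<Sum>j\<in>UNIV. cscale ((- h0) $ i $ j) (cadj (K i t) ** K j t))"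
      by (simp add: span cscale_sum_right cscale_cscale)
    finally show "(\<Sum>m\<in>UNIV. cadj (K m t) ** K' m)
        = cscale \<i> (\<Sum>i\<in>UNIV. \<Sum>j\<in>UNIV. cscale ((- h0) $ i $ j) (cadj (K i t) ** K j t))"
      by (simp add: A_def)
  qed
qed

lemma cadj_mexp_i_hermitian:
  assumes "cadj h = h"
  shows "cadj (mexp (cscale (\<i> * of_real \<theta>) h)) = mexp (cscale (of_real \<theta>) (cscale (- \<i>) h))"
  by (simp add: cadj_mexp cadj_cscale assms cscale_cscale mult.commute)

lemma mexp_i_hermitian_unitary:
  assumes "cadj h = h"
  shows "mexp (cscale (\<i> * of_real \<theta>) h) ** cadj (mexp (cscale (\<i> * of_real \<theta>) h)) = mat 1"
proof -
  have "cscale (of_real \<theta>) (cscale (- \<i>) h) = - cscale (\<i> * of_real \<theta>) h"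
    by (simp add: cscale_cscale cscale_minus_left[symmetric] mult.commute)
  then show ?thesis
    by (simp add: cadj_mexp_i_hermitian[OF assms] mexp_mult_mexp_uminus)
qed

(* The Kraus operators W_m(theta) of (1_D (x) u_theta^dag) V_theta, where u_theta = exp(i theta h). *)
definition rotated_kraus ::
    "complex^'d^'d \<Rightarrow> ('d \<Rightarrow> real \<Rightarrow> complex^'D^'D) \<Rightarrow> 'd \<Rightarrow> real \<Rightarrow> complex^'D^'D"
  where "rotated_kraus h K m \<theta> = kraus_mix (cadj (mexp (cscale (\<i> * of_real \<theta>) h))) (\<lambda>k. K k \<theta>) m"

definition rotated_kraus_deriv ::
    "complex^'d^'d \<Rightarrow> ('d \<Rightarrow> real \<Rightarrow> complex^'D^'D) \<Rightarrow> ('d \<Rightarrow> complex^'D^'D) \<Rightarrow> real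
      \<Rightarrow> 'd \<Rightarrow> complex^'D^'D"
  where "rotated_kraus_deriv h K K' t m =
    kraus_mix (cadj (mexp (cscale (\<i> * of_real t) h))) K' m
    + kraus_mix (cadj (mexp (cscale (\<i> * of_real t) h)) ** cscale (- \<i>) h) (\<lambda>k. K k t) m"

context
  fixes h :: "complex^'d::finite^'d" and K :: "'d \<Rightarrow> real \<Rightarrow> complex^'D::finite^'D"
  assumes herm: "cadj h = h"
begin

lemma kraus_eq_kraus_mix_rotated_kraus:
  "K m \<theta> = kraus_mix (mexp (cscale (\<i> * of_real \<theta>) h)) (\<lambda>k. rotated_kraus h K k \<theta>) m"
  by (simp add: rotated_kraus_def[abs_def] kraus_mix_kraus_mix mexp_i_hermitian_unitary[OF herm])

lemma sum_cadj_rotated_kraus: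
  "(\<Sum>m\<in>UNIV. cadj (rotated_kraus h K m \<theta>) ** rotated_kraus h K m \<theta>)
     = (\<Sum>m\<in>UNIV. cadj (K m \<theta>) ** K m \<theta>)"
  unfolding rotated_kraus_def
  by (rule sum_cadj_kraus_mix_unitary) (simp add: mexp_i_hermitian_unitary[OF herm])

lemma channel_rotated_kraus: "channel (\<lambda>m. rotated_kraus h K m \<theta>) = channel (\<lambda>m. K m \<theta>)"
  unfolding rotated_kraus_def
  by (rule channel_kraus_mix_unitary) (simp add: mexp_i_hermitian_unitary[OF herm])

lemma has_vector_derivative_rotated_kraus:
  assumes "\<And>k. (K k has_vector_derivative K' k) (at t)"
  shows "(rotated_kraus h K m has_vector_derivative rotated_kraus_deriv h K K' t m) (at t)"
  unfolding rotated_kraus_def[abs_def] rotated_kraus_deriv_def cadj_mexp_i_hermitian[OF herm]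
  by (intro has_vector_derivative_kraus_mix has_vector_derivative_mexp assms)

lemma sum_cadj_rotated_kraus_deriv:
  "(\<Sum>m\<in>UNIV. cadj (rotated_kraus h K m t) ** rotated_kraus_deriv h K K' t m)
   = (\<Sum>m\<in>UNIV. cadj (K m t) ** K' m)
     - cscale \<i> (\<Sum>i\<in>UNIV. \<Sum>j\<in>UNIV. cscale (h $ i $ j) (cadj (K i t) ** K j t))"
proof -
  have "(\<Sum>m\<in>UNIV. cadj (rotated_kraus h K m t) ** rotated_kraus_deriv h K K' t m)
      = (\<Sum>m\<in>UNIV. cadj (K m t) ** K' m)
        + (\<Sum>i\<in>UNIV. \<Sum>j\<in>UNIV. cscale ((cscale (- \<i>) h) $ i $ j) (cadj (K i t) ** K j t))"
    by (simp add: rotated_kraus_def rotated_kraus_deriv_def matrix_add_ldistrib sum.distrib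
        sum_cadj_kraus_mix_mult matrix_mul_assoc mexp_i_hermitian_unitary[OF herm] sum_cscale_mat_1)
  also have "\<dots> = (\<Sum>m\<in>UNIV. cadj (K m t) ** K' m)
      - cscale \<i> (\<Sum>i\<in>UNIV. \<Sum>j\<in>UNIV. cscale (h $ i $ j) (cadj (K i t) ** K j t))"
    by (simp add: cscale_nth cscale_sum_right cscale_cscale cscale_minus_left sum_negf[symmetric])
  finally show ?thesis .
qed

lemma gauge_fixed_isometry_rotated_kraus:
  assumes "(\<Sum>m\<in>UNIV. cadj (K m t) ** K m t) = mat 1"
    and "(\<Sum>m\<in>UNIV. cadj (K m t) ** K' m)
           = cscale \<i> (\<Sum>i\<in>UNIV. \<Sum>j\<in>UNIV. cscale (h $ i $ j) (cadj (K i t) ** K j t))"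
  shows "gauge_fixed_isometry (\<lambda>m. rotated_kraus h K m t) (rotated_kraus_deriv h K K' t)"
  by unfold_locales (simp_all add: sum_cadj_rotated_kraus sum_cadj_rotated_kraus_deriv assms)

end

theorem lemma2:
  fixes K :: "'d::finite \<Rightarrow> real \<Rightarrow> complex^'D::finite^'D"
    and \<theta>0 :: real
  assumes diff: "\<And>m \<theta>. K m differentiable (at \<theta>)"
    and kraus: "\<And>\<theta>. (\<Sum>m\<in>UNIV. cadj (K m \<theta>) ** K m \<theta>) = mat 1"
    and HKS: "\<exists>c :: 'd \<Rightarrow> 'd \<Rightarrow> complex.
        cscale \<i> (\<Sum>m\<in>UNIV. cadj (K m \<theta>0) ** vector_derivative (K m) (at \<theta>0))
        = (\<Sum>i\<in>UNIV. \<Sum>j\<in>UNIV. cscale (c i j) (cadj (K i \<theta>0) ** K j \<theta>0))"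
  shows "\<exists>h :: complex^'d^'d. cadj h = h \<and>
    (let u = (\<lambda>\<theta>::real. mexp (cscale (\<i> * complex_of_real \<theta>) h));
         W = (\<lambda>m \<theta>. \<Sum>k\<in>UNIV. cscale (cadj (u \<theta>) $ m $ k) (K k \<theta>));
         dW = (\<lambda>m. vector_derivative (W m) (at \<theta>0));
         E = channel (\<lambda>m. K m \<theta>0)
     in (\<forall>\<theta> m. K m \<theta> = (\<Sum>k\<in>UNIV. cscale (u \<theta> $ m $ k) (W k \<theta>)))
      \<and> (\<Sum>m\<in>UNIV. cadj (W m \<theta>0) ** dW m) = 0
      \<and> (\<forall>(\<rho> :: complex^'D^'D) (\<xi> :: 'D \<Rightarrow> 'D \<Rightarrow> complex).
            E \<rho> = \<rho> \<and> trace \<rho> = 1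
            \<and> (\<forall>s s'. \<rho> $ s $ s' = (\<Sum>a\<in>UNIV. \<xi> a s * cnj (\<xi> a s')))
          \<longrightarrow>
            (\<Sum>m\<in>UNIV. trace (W m \<theta>0 ** \<rho> ** cadj (dW m))) = 0
          \<and> (\<forall>\<tau>::nat. trace (\<Sum>m\<in>UNIV. dW m **
                 (E ^^ \<tau>) (\<Sum>n\<in>UNIV. W n \<theta>0 ** \<rho> ** cadj (dW n)) ** cadj (W m \<theta>0)) = 0)
          \<and> (\<forall>T::nat. pure_qfi (sites T) (mps_state W \<xi>) \<theta>0
                = 4 * of_nat T * (\<Sum>m\<in>UNIV. trace (dW m ** \<rho> ** cadj (dW m))))))"
proof -
  define K' where "K' m = vector_derivative (K m) (at \<theta>0)" for m
  have K': "(K m has_vector_derivative K' m) (at \<theta>0)" for m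
    unfolding K'_def using diff vector_derivative_works by blast
  obtain h where herm: "cadj h = h"
    and generator: "(\<Sum>m\<in>UNIV. cadj (K m \<theta>0) ** K' m)
          = cscale \<i> (\<Sum>i\<in>UNIV. \<Sum>j\<in>UNIV. cscale (h $ i $ j) (cadj (K i \<theta>0) ** K j \<theta>0))"
    using HKS hks_hermitian_generator[OF K' kraus] unfolding K'_def by blast
  have W': "(rotated_kraus h K m has_vector_derivative rotated_kraus_deriv h K K' \<theta>0 m) (at \<theta>0)" for m
    by (rule has_vector_derivative_rotated_kraus[OF herm K'])
  interpret gauge_fixed_isometry "\<lambda>m. rotated_kraus h K m \<theta>0" "rotated_kraus_deriv h K K' \<theta>0"
    by (rule gauge_fixed_isometry_rotated_kraus[where K = K, OF herm kraus generator])
  have W: "(\<Sum>k\<in>UNIV. cscale (cadj (mexp (cscale (\<i> * of_real \<theta>) h)) $ m $ k) (K k \<theta>))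
      = rotated_kraus h K m \<theta>" for m \<theta>
    by (simp add: rotated_kraus_def kraus_mix_def)
  have dW: "vector_derivative (rotated_kraus h K m) (at \<theta>0) = rotated_kraus_deriv h K K' \<theta>0 m" for m
    using W' by (rule vector_derivative_at)
  show ?thesis
    by (rule exI[of _ h], unfold Let_def W dW)
      (use herm kraus_eq_kraus_mix_rotated_kraus[where K = K, OF herm, unfolded kraus_mix_def]
        gauge sum_trace_gauge trace_sum_gauge
        pure_qfi_mps_state[OF W' gauge_fixed_isometry_axioms,
          unfolded channel_rotated_kraus[where K = K, OF herm]]
        in blast)
qed

end
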